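(* If $(L,\alpha_L)$ is an $\alpha$-perfect Hom-Leibniz algebra, then the map $\mathrm{Aut}(L,\alpha_L)\to\{g\in\mathrm{Aut}(\mathfrak{uce}_\alpha(L),\overline{\alpha}):g(\mathrm{Ker}\,U_\alpha)=\mathrm{Ker}\,U_\alpha\}$, $h\mapsto\mathfrak{uce}_\alpha(h)$, is a group isomorphism.
   Context: Hom-Leibniz algebras are multiplicative: $(L,\alpha_L)$ is a $\mathbb{K}$-vector space with bilinear bracket and linear $\alpha_L$ such that $[\alpha_L(x),[y,z]]=[[x,y],\alpha_L(z)]-[[x,z],\alpha_L(y)]$ and $\alpha_L[x,y]=[\alpha_L(x),\alpha_L(y)]$; homomorphisms preserve brackets and commute with structure maps; $\mathrm{Aut}$ denotes the group of bijective homomorphisms. $(L,\alpha_L)$ is $\alpha$-perfect if $L=[\alpha_L(L),\alpha_L(L)]$. For $\alpha$-perfect $(L,\alpha_L)$: $I_L\subseteq\alpha_L(L)\otimes\alpha_L(L)$ is spanned by $-[x_1,x_2]\otimes\alpha_L(x_3)+[x_1,x_3]\otimes\alpha_L(x_2)+\alpha_L(x_1)\otimes[x_2,x_3]$; $\mathfrak{uce}_\alpha(L)=(\alpha_L(L)\otimes\alpha_L(L))/I_L$ with classes $\{\alpha_L(x_1),\alpha_L(x_2)\}$, bracket $[\{a,b\},\{c,e\}]=\{[a,b],[c,e]\}$, endomorphism $\overline{\alpha}\{\alpha_L(x_1),\alpha_L(x_2)\}=\{\alpha_L^2(x_1),\alpha_L^2(x_2)\}$, and $U_\alpha:\mathfrak{uce}_\alpha(L)\to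 L$, $U_\alpha\{a,b\}=[a,b]$. For $h\in\mathrm{Aut}(L,\alpha_L)$, $\mathfrak{uce}_\alpha(h)\{\alpha_L(x_1),\alpha_L(x_2)\}=\{\alpha_L(h(x_1)),\alpha_L(h(x_2))\}$. *)

theory Defs
  imports Complex_Main "HOL-Algebra.Group"
begin

text \<open>The underlying vector space is the whole type 'v with scalar multiplication s
  over the field 'k; br is the bracket and al the structure map alpha_L.\<close>

definition hom_leibniz ::
  "('k::field \<Rightarrow> 'v::ab_group_add \<Rightarrow> 'v) \<Rightarrow> ('v \<Rightarrow> 'v \<Rightarrow> 'v) \<Rightarrow> ('v \<Rightarrow> 'v) \<Rightarrow> bool" where
  "hom_leibniz s br al \<longleftrightarrow>
     vector_space s
   \<and> (\<forall>y. Vector_Spaces.linear s s (\<lambda>x. br x y))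
   \<and> (\<forall>x. Vector_Spaces.linear s s (br x))
   \<and> Vector_Spaces.linear s s al
   \<and> (\<forall>x y z. br (al x) (br y z) = br (br x y) (al z) - br (br x z) (al y))
   \<and> (\<forall>x y. al (br x y) = br (al x) (al y))"

definition alpha_perfect ::
  "('k::field \<Rightarrow> 'v::ab_group_add \<Rightarrow> 'v) \<Rightarrow> ('v \<Rightarrow> 'v \<Rightarrow> 'v) \<Rightarrow> ('v \<Rightarrow> 'v) \<Rightarrow> bool" where
  "alpha_perfect s br al \<longleftrightarrow>
     module.span s {br (al x) (al y) | x y. True} = UNIV"

definition leib_hom ::
  "('k::field \<Rightarrow> 'v::ab_group_add \<Rightarrow> 'v) \<Rightarrow> ('v \<Rightarrow> 'v \<Rightarrow> 'v) \<Rightarrow> ('v \<Rightarrow> 'v) \<Rightarrow> ('v \<Rightarrow> 'v) \<Rightarrow> bool" where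
  "leib_hom s br al h \<longleftrightarrow> Vector_Spaces.linear s s h
     \<and> (\<forall>x y. h (br x y) = br (h x) (h y)) \<and> (\<forall>x. h (al x) = al (h x))"

definition AutL ::
  "('k::field \<Rightarrow> 'v::ab_group_add \<Rightarrow> 'v) \<Rightarrow> ('v \<Rightarrow> 'v \<Rightarrow> 'v) \<Rightarrow> ('v \<Rightarrow> 'v) \<Rightarrow> ('v \<Rightarrow> 'v) monoid" where
  "AutL s br al = \<lparr>carrier = {h. leib_hom s br al h \<and> bij h}, mult = (\<circ>), one = id\<rparr>"

text \<open>The tensor product alpha(L) \<otimes> alpha(L) is realised as the free vector space on
  pairs in alpha(L) x alpha(L) (finitely supported functions to 'k) modulo the bilinearity
  relations; we additionally quotient by the generators of I_L. Elements of uce_alpha(L)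
  are equivalence classes (sets of representatives).\<close>

definition supp :: "('a \<Rightarrow> 'k::zero) \<Rightarrow> 'a set" where
  "supp f = {p. f p \<noteq> 0}"

definition delta :: "'a \<Rightarrow> 'a \<Rightarrow> 'k::{zero,one}" where
  "delta p = (\<lambda>q. if q = p then 1 else 0)"

definition FV :: "('v \<Rightarrow> 'v) \<Rightarrow> ('v \<times> 'v \<Rightarrow> 'k::field) set" where
  "FV al = {f. finite (supp f) \<and> supp f \<subseteq> range al \<times> range al}"

definition rel_gens ::
  "('k::field \<Rightarrow> 'v::ab_group_add \<Rightarrow> 'v) \<Rightarrow> ('v \<Rightarrow> 'v \<Rightarrow> 'v) \<Rightarrow> ('v \<Rightarrow> 'v) \<Rightarrow> ('v \<times> 'v \<Rightarrow> 'k) set" where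
  "rel_gens s br al =
     {(\<lambda>q. delta (a + a', b) q - delta (a, b) q - delta (a', b) q) | a a' b.
         a \<in> range al \<and> a' \<in> range al \<and> b \<in> range al}
   \<union> {(\<lambda>q. delta (a, b + b') q - delta (a, b) q - delta (a, b') q) | a b b'.
         a \<in> range al \<and> b \<in> range al \<and> b' \<in> range al}
   \<union> {(\<lambda>q. delta (s c a, b) q - c * delta (a, b) q) | c a b.
         a \<in> range al \<and> b \<in> range al}
   \<union> {(\<lambda>q. delta (a, s c b) q - c * delta (a, b) q) | c a b.
         a \<in> range al \<and> b \<in> range al}
   \<union> {(\<lambda>q. - delta (br x1 x2, al x3) q + delta (br x1 x3, al x2) q + delta (al x1, br x2 x3) q)
         | x1 x2 x3. True}"

inductive_set relsp ::
  "('k::field \<Rightarrow> 'v::ab_group_add \<Rightarrow> 'v) \<Rightarrow> ('v \<Rightarrow> 'v \<Rightarrow> 'v) \<Rightarrow> ('v \<Rightarrow> 'v) \<Rightarrow> ('v \<times> 'v \<Rightarrow> 'k) set"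
  for s br al where
  zero: "(\<lambda>_. 0) \<in> relsp s br al"
| gen: "g \<in> rel_gens s br al \<Longrightarrow> g \<in> relsp s br al"
| add: "f \<in> relsp s br al \<Longrightarrow> g \<in> relsp s br al \<Longrightarrow> (\<lambda>p. f p + g p) \<in> relsp s br al"
| smul: "f \<in> relsp s br al \<Longrightarrow> (\<lambda>p. c * f p) \<in> relsp s br al"

definition cls ::
  "('k::field \<Rightarrow> 'v::ab_group_add \<Rightarrow> 'v) \<Rightarrow> ('v \<Rightarrow> 'v \<Rightarrow> 'v) \<Rightarrow> ('v \<Rightarrow> 'v) \<Rightarrow> ('v \<times> 'v \<Rightarrow> 'k) \<Rightarrow> ('v \<times> 'v \<Rightarrow> 'k) set" where
  "cls s br al f = {g \<in> FV al. (\<lambda>p. f p - g p) \<in> relsp s br al}"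

definition UC ::
  "('k::field \<Rightarrow> 'v::ab_group_add \<Rightarrow> 'v) \<Rightarrow> ('v \<Rightarrow> 'v \<Rightarrow> 'v) \<Rightarrow> ('v \<Rightarrow> 'v) \<Rightarrow> ('v \<times> 'v \<Rightarrow> 'k) set set" where
  "UC s br al = cls s br al ` FV al"

definition rep :: "'a set \<Rightarrow> 'a" where
  "rep X = (SOME f. f \<in> X)"

definition uc_add where
  "uc_add s br al X Y = cls s br al (\<lambda>p. rep X p + rep Y p)"

definition uc_smul where
  "uc_smul s br al c X = cls s br al (\<lambda>p. c * rep X p)"

text \<open>Bracket: [{a,b},{c,e}] = {[a,b],[c,e]}, extended bilinearly.\<close>

definition uc_br where
  "uc_br s br al X Y = cls s br al (\<lambda>r.
      \<Sum>p\<in>supp (rep X). \<Sum>q\<in>supp (rep Y).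
         rep X p * rep Y q * delta (br (fst p) (snd p), br (fst q) (snd q)) r)"

text \<open>Push-forward of a finitely supported function along a map of pairs
  (linear extension of {a,b} \<mapsto> {phi(a,b)}).\<close>

definition push :: "('a \<Rightarrow> 'b) \<Rightarrow> ('a \<Rightarrow> 'k::field) \<Rightarrow> 'b \<Rightarrow> 'k" where
  "push \<phi> f = (\<lambda>q. \<Sum>p\<in>{p \<in> supp f. \<phi> p = q}. f p)"

definition uc_alpha where
  "uc_alpha s br al X = cls s br al (push (map_prod al al) (rep X))"

definition U_alpha where
  "U_alpha s br al X = (\<Sum>p\<in>supp (rep X). s (rep X p) (br (fst p) (snd p)))"

definition KerU where
  "KerU s br al = {X \<in> UC s br al. U_alpha s br al X = 0}"

text \<open>uce_alpha(h){alpha x1, alpha x2} = {alpha (h x1), alpha (h x2)} = {h (alpha x1), h (alpha x2)},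
  extended linearly; restricted to the carrier.\<close>

definition uce_map where
  "uce_map s br al h = restrict (\<lambda>X. cls s br al (push (map_prod h h) (rep X))) (UC s br al)"

definition uc_aut where
  "uc_aut s br al g \<longleftrightarrow> g \<in> extensional (UC s br al)
     \<and> bij_betw g (UC s br al) (UC s br al)
     \<and> (\<forall>X\<in>UC s br al. \<forall>Y\<in>UC s br al. g (uc_add s br al X Y) = uc_add s br al (g X) (g Y))
     \<and> (\<forall>c. \<forall>X\<in>UC s br al. g (uc_smul s br al c X) = uc_smul s br al c (g X))
     \<and> (\<forall>X\<in>UC s br al. \<forall>Y\<in>UC s br al. g (uc_br s br al X Y) = uc_br s br al (g X) (g Y))
     \<and> (\<forall>X\<in>UC s br al. g (uc_alpha s br al X) = uc_alpha s br al (g X))"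

definition StabUce where
  "StabUce s br al =
     \<lparr>carrier = {g. uc_aut s br al g \<and> g ` KerU s br al = KerU s br al},
      mult = (\<lambda>g g'. restrict (g \<circ> g') (UC s br al)),
      one = restrict id (UC s br al)\<rparr>"

end

theory Submission
  imports Defs
begin

text \<open>An automorphism \<open>h\<close> of \<open>L\<close> acts on generators by \<open>{a, b} \<mapsto> {h a, h b}\<close>; this
  respects the defining relations, satisfies \<open>U\<^sub>\<alpha> \<circ> uce\<^sub>\<alpha>(h) = h \<circ> U\<^sub>\<alpha>\<close> and therefore
  stabilises \<open>Ker U\<^sub>\<alpha>\<close>. As \<open>U\<^sub>\<alpha>\<close> is onto (\<open>\<alpha>\<close>-perfectness), \<open>h\<close> is recovered from
  \<open>uce\<^sub>\<alpha>(h)\<close>. Conversely, an automorphism \<open>g\<close> of \<open>uce\<^sub>\<alpha>(L)\<close> stabilising \<open>Ker U\<^sub>\<alpha>\<close>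
  descends along \<open>U\<^sub>\<alpha>\<close> to an automorphism \<open>h\<close> of \<open>L\<close>. Modulo bilinearity the bracket of
  \<open>uce\<^sub>\<alpha>(L)\<close> is \<open>[X, Y] = {U\<^sub>\<alpha> X, U\<^sub>\<alpha> Y}\<close>, so every generator \<open>{a, b}\<close> is a bracket
  \<open>[A, B]\<close> with \<open>U\<^sub>\<alpha> A = a\<close>, \<open>U\<^sub>\<alpha> B = b\<close>, on which \<open>g\<close> and \<open>uce\<^sub>\<alpha>(h)\<close> agree; hence
  \<open>g = uce\<^sub>\<alpha>(h)\<close>. The group structure of the stabiliser is transported from \<open>Aut(L)\<close>.\<close>

subsection \<open>Finitely supported functions\<close>

lemma supp_zero [simp]: "supp (\<lambda>_. 0) = {}"
  by (simp add: supp_def)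

lemma supp_delta [simp]: "supp (delta p :: 'a \<Rightarrow> 'k::zero_neq_one) = {p}"
  by (auto simp: supp_def delta_def)

lemma finite_supp_add:
  fixes f g :: "'a \<Rightarrow> 'k::monoid_add"
  shows "finite (supp f) \<Longrightarrow> finite (supp g) \<Longrightarrow> finite (supp (\<lambda>q. f q + g q))"
  by (rule finite_subset[of _ "supp f \<union> supp g"]) (auto simp: supp_def)

lemma finite_supp_scale:
  fixes f :: "'a \<Rightarrow> 'k::mult_zero"
  shows "finite (supp f) \<Longrightarrow> finite (supp (\<lambda>q. c * f q))"
  by (rule finite_subset[of _ "supp f"]) (auto simp: supp_def)

lemma finite_supp_uminus:
  fixes f :: "'a \<Rightarrow> 'k::group_add"
  shows "finite (supp f) \<Longrightarrow> finite (supp (\<lambda>q. - f q))"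
  by (simp add: supp_def)

lemma finite_supp_diff:
  fixes f g :: "'a \<Rightarrow> 'k::group_add"
  shows "finite (supp f) \<Longrightarrow> finite (supp g) \<Longrightarrow> finite (supp (\<lambda>q. f q - g q))"
  using finite_supp_add[of f "\<lambda>q. - g q"] finite_supp_uminus[of g] by simp

lemma finite_supp_delta: "finite (supp (delta p :: 'a \<Rightarrow> 'k::zero_neq_one))"
  by simp

lemmas finite_supp_intros =
  finite_supp_add finite_supp_scale finite_supp_uminus finite_supp_diff finite_supp_delta

lemma finite_supp_induct [consumes 1, case_names zero add_delta]:
  fixes f :: "'a \<Rightarrow> 'k::semiring_1"
  assumes "finite (supp f)"
    and "P (\<lambda>_. 0)"
    and "\<And>g p c. finite (supp g) \<Longrightarrow> P g \<Longrightarrow> P (\<lambda>q. g q + c * delta p q)"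
  shows "P f"
proof -
  have "P f" if "finite S" "supp f \<subseteq> S" for S and f :: "'a \<Rightarrow> 'k"
    using that
  proof (induction S arbitrary: f rule: finite_induct)
    case empty
    then have "f = (\<lambda>_. 0)" by (auto simp: supp_def)
    with assms(2) show ?case by simp
  next
    case (insert p S)
    have "supp (f(p := 0)) \<subseteq> S" using insert.prems by (auto simp: supp_def)
    with insert.IH insert.hyps(1) have "P (\<lambda>q. (f(p := 0)) q + f p * delta p q)"
      by (intro assms(3)) (simp_all add: finite_subset del: fun_upd_apply)
    moreover have "(\<lambda>q. (f(p := 0)) q + f p * delta p q) = f"
      by (auto simp: delta_def)
    ultimately show ?case by simp
  qed
  with assms(1) show ?thesis by blast
qed

lemma push_eq_sum:
  "finite S \<Longrightarrow> supp f \<subseteq> S \<Longrightarrow> push \<phi> f q = (\<Sum>p\<in>{p\<in>S. \<phi> p = q}. f p)"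
  unfolding push_def by (rule sum.mono_neutral_left) (auto simp: supp_def)

lemma supp_push_subset: "supp (push \<phi> f) \<subseteq> \<phi> ` supp f"
  by (force simp: supp_def push_def intro: sum.neutral)

lemma finite_supp_push: "finite (supp f) \<Longrightarrow> finite (supp (push \<phi> f))"
  by (meson finite_imageI finite_subset supp_push_subset)

lemma push_zero [simp]: "push \<phi> (\<lambda>_. 0) = (\<lambda>_. 0)"
  by (simp add: push_def)

lemma push_add:
  assumes "finite (supp f)" "finite (supp g)"
  shows "push \<phi> (\<lambda>q. f q + g q) = (\<lambda>q. push \<phi> f q + push \<phi> g q)"
proof
  fix q
  let ?S = "supp f \<union> supp g"
  have "supp (\<lambda>q. f q + g q) \<subseteq> ?S" by (auto simp: supp_def)
  with assms show "push \<phi> (\<lambda>q. f q + g q) q = push \<phi> f q + push \<phi> g q"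
    by (simp add: push_eq_sum[of ?S] sum.distrib)
qed

lemma push_scale:
  "finite (supp f) \<Longrightarrow> push \<phi> (\<lambda>q. c * f q) = (\<lambda>q. c * push \<phi> f q)"
  by (rule ext, subst (1 2) push_eq_sum[of "supp f"]) (auto simp: supp_def sum_distrib_left)

lemma push_diff:
  fixes f g :: "'a \<Rightarrow> 'k::field"
  assumes "finite (supp f)" "finite (supp g)"
  shows "push \<phi> (\<lambda>q. f q - g q) = (\<lambda>q. push \<phi> f q - push \<phi> g q)"
  using push_add[of f "\<lambda>q. (-1) * g q" \<phi>] push_scale[of g \<phi> "-1"] assms
  by (simp add: finite_supp_intros)

lemma push_delta: "push \<phi> (delta p) = (delta (\<phi> p) :: 'b \<Rightarrow> 'k::field)"
proof
  fix q
  have "{p' \<in> supp (delta p :: 'a \<Rightarrow> 'k). \<phi> p' = q} = (if \<phi> p = q then {p} else {})"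
    by auto
  then show "push \<phi> (delta p) q = (delta (\<phi> p) q :: 'k)"
    by (simp add: push_def delta_def)
qed

lemma push_add_delta:
  "finite (supp f) \<Longrightarrow>
   push \<phi> (\<lambda>q. f q + c * delta p q) = (\<lambda>q. push \<phi> f q + c * (delta (\<phi> p) q :: 'k::field))"
  by (simp add: push_add push_scale push_delta finite_supp_intros)

lemma push_push:
  fixes f :: "'a \<Rightarrow> 'k::field"
  shows "finite (supp f) \<Longrightarrow> push \<phi> (push \<psi> f) = push (\<phi> \<circ> \<psi>) f"
  by (induction rule: finite_supp_induct) (simp_all add: push_add_delta finite_supp_push)

lemma push_id:
  fixes f :: "'a \<Rightarrow> 'k::field"
  shows "finite (supp f) \<Longrightarrow> push id f = f"
  by (induction rule: finite_supp_induct) (simp_all add: push_add_delta)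

lemma bij_inv_into_preserves:
  assumes "bij h" "\<And>x y. h (f x y) = f (h x) (h y)"
  shows "inv_into UNIV h (f x y) = f (inv_into UNIV h x) (inv_into UNIV h y)"
  by (metis assms bij_inv_eq_iff)

locale alpha_perfect_hom_leibniz =
  fixes s :: "'k::field \<Rightarrow> 'v::ab_group_add \<Rightarrow> 'v"
    and br :: "'v \<Rightarrow> 'v \<Rightarrow> 'v" and al :: "'v \<Rightarrow> 'v"
  assumes hom_leibniz: "hom_leibniz s br al"
    and alpha_perfect: "alpha_perfect s br al"
begin

sublocale v: vector_space s
  using hom_leibniz by (simp add: hom_leibniz_def)

abbreviation "R \<equiv> relsp s br al"
abbreviation "cl \<equiv> cls s br al"
abbreviation "UCE \<equiv> UC s br al"
abbreviation "U \<equiv> U_alpha s br al"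
abbreviation "Ker \<equiv> KerU s br al"
abbreviation "uadd \<equiv> uc_add s br al"
abbreviation "usmul \<equiv> uc_smul s br al"
abbreviation "ubr \<equiv> uc_br s br al"
abbreviation "ualpha \<equiv> uc_alpha s br al"

lemma linear_alpha: "Vector_Spaces.linear s s al"
  using hom_leibniz by (simp add: hom_leibniz_def)

lemma bracket_add_left: "br (x + x') y = br x y + br x' y"
  and bracket_scale_left: "br (s c x) y = s c (br x y)"
  and bracket_add_right: "br y (x + x') = br y x + br y x'"
  and bracket_scale_right: "br y (s c x) = s c (br y x)"
  using hom_leibniz by (simp_all add: hom_leibniz_def Vector_Spaces.linear_iff)

lemma hom_leibniz_identity: "br (al x) (br y z) = br (br x y) (al z) - br (br x z) (al y)"
  and alpha_bracket: "al (br x y) = br (al x) (al y)"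
  using hom_leibniz by (simp_all add: hom_leibniz_def)

lemma leib_hom_add: "leib_hom s br al h \<Longrightarrow> h (x + y) = h x + h y"
  and leib_hom_scale: "leib_hom s br al h \<Longrightarrow> h (s c x) = s c (h x)"
  and leib_hom_bracket: "leib_hom s br al h \<Longrightarrow> h (br x y) = br (h x) (h y)"
  and leib_hom_alpha: "leib_hom s br al h \<Longrightarrow> h (al x) = al (h x)"
  by (simp_all add: leib_hom_def Vector_Spaces.linear_iff)

lemma leib_hom_zero: "leib_hom s br al h \<Longrightarrow> h 0 = 0"
  using leib_hom_scale[of h 0 0] by simp

lemma leib_hom_alpha_self: "leib_hom s br al al"
  using linear_alpha alpha_bracket by (simp add: leib_hom_def)

lemma leib_hom_id: "leib_hom s br al id"
  by (simp add: leib_hom_def Vector_Spaces.linear_iff v.vector_space_axioms)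

lemma leib_hom_comp: "leib_hom s br al h \<Longrightarrow> leib_hom s br al h' \<Longrightarrow> leib_hom s br al (h \<circ> h')"
  by (simp add: leib_hom_def Vector_Spaces.linear_iff)

lemma leib_hom_inv:
  assumes h: "leib_hom s br al h" and "bij h"
  shows "leib_hom s br al (inv_into UNIV h)"
  using bij_inv_into_preserves[OF \<open>bij h\<close>, of "(+)"] bij_inv_into_preserves[OF \<open>bij h\<close>, of "\<lambda>x _. s c x" for c]
    bij_inv_into_preserves[OF \<open>bij h\<close>, of br] bij_inv_into_preserves[OF \<open>bij h\<close>, of "\<lambda>x _. al x"]
  by (simp add: leib_hom_def Vector_Spaces.linear_iff v.vector_space_axioms
      leib_hom_add[OF h] leib_hom_scale[OF h] leib_hom_bracket[OF h] leib_hom_alpha[OF h])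

lemma group_AutL: "group (AutL s br al)"
proof (rule groupI)
  show "\<exists>y\<in>carrier (AutL s br al). y \<otimes>\<^bsub>AutL s br al\<^esub> h = \<one>\<^bsub>AutL s br al\<^esub>"
    if "h \<in> carrier (AutL s br al)" for h
  proof -
    from that have "leib_hom s br al h" "bij h" by (auto simp: AutL_def)
    then show ?thesis
      by (intro bexI[of _ "inv_into UNIV h"])
        (simp_all add: AutL_def leib_hom_inv bij_imp_bij_inv bij_is_inj)
  qed
qed (auto simp: AutL_def leib_hom_comp leib_hom_id bij_comp comp_assoc)

lemma range_alpha: "range al = UNIV"
proof -
  interpret vector_space_pair s s ..
  have "v.subspace (range al)"
    using linear_subspace_image[OF linear_alpha v.subspace_UNIV] .
  moreover have "{br (al x) (al y) | x y. True} \<subseteq> range al"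
    by (auto simp: alpha_bracket[symmetric])
  ultimately have "v.span {br (al x) (al y) | x y. True} \<subseteq> range al"
    by (rule v.span_minimal[rotated])
  with alpha_perfect show ?thesis
    unfolding alpha_perfect_def by auto
qed

lemma span_brackets: "v.span {br a b | a b. True} = UNIV"
proof -
  have "{br (al x) (al y) | x y. True} = {br a b | a b. True}"
    using range_alpha by (metis (mono_tags, opaque_lifting) rangeE UNIV_I)
  with alpha_perfect show ?thesis
    unfolding alpha_perfect_def by simp
qed

lemma FV_iff: "f \<in> FV al \<longleftrightarrow> finite (supp f)"
  by (simp add: FV_def range_alpha)

lemma finite_supp_rel_gens: "g \<in> rel_gens s br al \<Longrightarrow> finite (supp g)"
  unfolding rel_gens_def by (auto intro!: finite_supp_intros)

lemma finite_supp_relsp: "f \<in> R \<Longrightarrow> finite (supp f)"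
  by (induction rule: relsp.induct) (auto intro: finite_supp_rel_gens finite_supp_intros)

lemma relsp_add: "f \<in> R \<Longrightarrow> g \<in> R \<Longrightarrow> (\<lambda>p. f p + g p) \<in> R"
  and relsp_scale: "f \<in> R \<Longrightarrow> (\<lambda>p. c * f p) \<in> R"
  by (fact relsp.add relsp.smul)+

lemma relsp_diff: "f \<in> R \<Longrightarrow> g \<in> R \<Longrightarrow> (\<lambda>p. f p - g p) \<in> R"
  using relsp_add[OF _ relsp_scale[of g "-1"], of f] by simp

definition rel_equiv :: "('v \<times> 'v \<Rightarrow> 'k) \<Rightarrow> ('v \<times> 'v \<Rightarrow> 'k) \<Rightarrow> bool" where
  "rel_equiv f g \<longleftrightarrow> (\<lambda>p. f p - g p) \<in> R"

lemma rel_equiv_refl: "rel_equiv f f"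
  using relsp.zero by (simp add: rel_equiv_def)

lemma rel_equiv_sym: "rel_equiv f g \<Longrightarrow> rel_equiv g f"
  using relsp_diff[OF relsp.zero] by (fastforce simp: rel_equiv_def)

lemma rel_equiv_trans [trans]: "rel_equiv f g \<Longrightarrow> rel_equiv g h \<Longrightarrow> rel_equiv f h"
  using relsp_add by (fastforce simp: rel_equiv_def)

lemma rel_equiv_add:
  "rel_equiv f f' \<Longrightarrow> rel_equiv g g' \<Longrightarrow> rel_equiv (\<lambda>p. f p + g p) (\<lambda>p. f' p + g' p)"
  using relsp_add[of "\<lambda>p. f p - f' p" "\<lambda>p. g p - g' p"]
  by (simp add: rel_equiv_def algebra_simps)

lemma rel_equiv_scale: "rel_equiv f f' \<Longrightarrow> rel_equiv (\<lambda>p. c * f p) (\<lambda>p. c * f' p)"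
  using relsp_scale[of "\<lambda>p. f p - f' p" c] by (simp add: rel_equiv_def algebra_simps)

lemma finite_supp_rel_equiv: "rel_equiv f g \<Longrightarrow> finite (supp g) \<Longrightarrow> finite (supp f)"
  using finite_supp_add[OF finite_supp_relsp] by (fastforce simp: rel_equiv_def)

lemma cls_eq: "cl f = {g. finite (supp g) \<and> rel_equiv f g}"
  by (auto simp: cls_def FV_iff rel_equiv_def)

lemma cls_eqI: "rel_equiv f g \<Longrightarrow> cl f = cl g"
  unfolding cls_eq using rel_equiv_trans rel_equiv_sym by blast

lemma UC_eq: "UCE = {cl f | f. finite (supp f)}"
  by (auto simp: UC_def FV_iff)

lemma cls_in_UC: "finite (supp f) \<Longrightarrow> cl f \<in> UCE"
  by (auto simp: UC_eq)

lemma UC_cases: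
  assumes "X \<in> UCE"
  obtains f where "finite (supp f)" "X = cl f"
  using assms by (auto simp: UC_eq)

lemma rel_equiv_rep_cls: "finite (supp f) \<Longrightarrow> rel_equiv (rep (cl f)) f"
  using someI[of "\<lambda>g. g \<in> cl f" f] rel_equiv_refl
  by (auto simp: rep_def cls_eq intro: rel_equiv_sym)

lemma finite_supp_rep: "X \<in> UCE \<Longrightarrow> finite (supp (rep X))"
  by (auto elim: UC_cases intro: finite_supp_rel_equiv[OF rel_equiv_rep_cls])

lemma uc_add_cls:
  "finite (supp f) \<Longrightarrow> finite (supp g) \<Longrightarrow> uadd (cl f) (cl g) = cl (\<lambda>p. f p + g p)"
  unfolding uc_add_def by (intro cls_eqI rel_equiv_add rel_equiv_rep_cls)

lemma uc_smul_cls: "finite (supp f) \<Longrightarrow> usmul c (cl f) = cl (\<lambda>p. c * f p)"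
  unfolding uc_smul_def by (intro cls_eqI rel_equiv_scale rel_equiv_rep_cls)

lemma uc_add_in_UC: "X \<in> UCE \<Longrightarrow> Y \<in> UCE \<Longrightarrow> uadd X Y \<in> UCE"
  by (auto elim!: UC_cases simp: uc_add_cls intro!: cls_in_UC finite_supp_intros)

lemma uc_smul_in_UC: "X \<in> UCE \<Longrightarrow> usmul c X \<in> UCE"
  by (auto elim!: UC_cases simp: uc_smul_cls intro!: cls_in_UC finite_supp_intros)

subsection \<open>The map \<open>U\<^sub>\<alpha>\<close> and the bracket of \<open>uce\<^sub>\<alpha>(L)\<close>\<close>

definition bracket_sum :: "('v \<times> 'v \<Rightarrow> 'k) \<Rightarrow> 'v" where
  "bracket_sum f = (\<Sum>p\<in>supp f. s (f p) (br (fst p) (snd p)))"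

lemma bracket_sum_eq_sum:
  "finite S \<Longrightarrow> supp f \<subseteq> S \<Longrightarrow> bracket_sum f = (\<Sum>p\<in>S. s (f p) (br (fst p) (snd p)))"
  unfolding bracket_sum_def by (rule sum.mono_neutral_left) (auto simp: supp_def)

lemma bracket_sum_add:
  assumes "finite (supp f)" "finite (supp g)"
  shows "bracket_sum (\<lambda>q. f q + g q) = bracket_sum f + bracket_sum g"
proof -
  let ?S = "supp f \<union> supp g"
  have "supp (\<lambda>q. f q + g q) \<subseteq> ?S" by (auto simp: supp_def)
  with assms show ?thesis
    by (simp add: bracket_sum_eq_sum[of ?S] v.scale_left_distrib sum.distrib)
qed

lemma bracket_sum_scale:
  "finite (supp f) \<Longrightarrow> bracket_sum (\<lambda>q. c * f q) = s c (bracket_sum f)"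
  by (subst (1 2) bracket_sum_eq_sum[of "supp f"]) (auto simp: supp_def v.scale_sum_right)

lemma bracket_sum_diff:
  assumes "finite (supp f)" "finite (supp g)"
  shows "bracket_sum (\<lambda>q. f q - g q) = bracket_sum f - bracket_sum g"
  using bracket_sum_add[of f "\<lambda>q. (-1) * g q"] bracket_sum_scale[of g "-1"] assms
  by (simp add: finite_supp_intros)

lemma bracket_sum_zero [simp]: "bracket_sum (\<lambda>_. 0) = 0"
  by (simp add: bracket_sum_def)

lemma bracket_sum_delta [simp]: "bracket_sum (delta p) = br (fst p) (snd p)"
  unfolding bracket_sum_def supp_delta by (simp add: delta_def)

lemma bracket_sum_rel_gens: "g \<in> rel_gens s br al \<Longrightarrow> bracket_sum g = 0"
  unfolding rel_gens_def
  by (auto simp: bracket_sum_add bracket_sum_diff bracket_sum_scale finite_supp_intros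
      bracket_add_left bracket_add_right bracket_scale_left bracket_scale_right
      hom_leibniz_identity)

lemma bracket_sum_relsp: "g \<in> R \<Longrightarrow> bracket_sum g = 0"
  by (induction rule: relsp.induct)
    (simp_all add: bracket_sum_rel_gens bracket_sum_add bracket_sum_scale finite_supp_relsp)

lemma U_alpha_cls: "finite (supp f) \<Longrightarrow> U (cl f) = bracket_sum f"
  using rel_equiv_rep_cls[of f] bracket_sum_relsp bracket_sum_diff
    finite_supp_rel_equiv[OF rel_equiv_rep_cls]
  by (fastforce simp: U_alpha_def bracket_sum_def[symmetric] rel_equiv_def)

lemma U_alpha_add: "X \<in> UCE \<Longrightarrow> Y \<in> UCE \<Longrightarrow> U (uadd X Y) = U X + U Y"
  by (auto elim!: UC_cases simp: uc_add_cls U_alpha_cls bracket_sum_add finite_supp_intros)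

lemma U_alpha_smul: "X \<in> UCE \<Longrightarrow> U (usmul c X) = s c (U X)"
  by (auto elim!: UC_cases simp: uc_smul_cls U_alpha_cls bracket_sum_scale finite_supp_intros)

lemma U_alpha_delta: "U (cl (delta (a, b))) = br a b"
  by (simp add: U_alpha_cls)

lemma U_alpha_surj: "U ` UCE = UNIV"
proof -
  have "v.subspace (U ` UCE)"
  proof (rule v.subspaceI)
    have "U (cl (\<lambda>_. 0)) = 0" by (simp add: U_alpha_cls)
    then show "0 \<in> U ` UCE" by (metis cls_in_UC finite.emptyI image_eqI supp_zero)
    show "x + y \<in> U ` UCE" if "x \<in> U ` UCE" "y \<in> U ` UCE" for x y
      using that by (auto simp: U_alpha_add[symmetric] intro!: imageI uc_add_in_UC)
    show "s c x \<in> U ` UCE" if "x \<in> U ` UCE" for c x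
      using that by (auto simp: U_alpha_smul[symmetric] intro!: imageI uc_smul_in_UC)
  qed
  moreover have "{br a b | a b. True} \<subseteq> U ` UCE"
    by (auto simp: U_alpha_delta[symmetric] intro!: imageI cls_in_UC)
  ultimately have "v.span {br a b | a b. True} \<subseteq> U ` UCE"
    by (rule v.span_minimal[rotated])
  then show ?thesis
    unfolding span_brackets by blast
qed

lemma U_alpha_surjE:
  obtains X where "X \<in> UCE" "U X = x"
  using U_alpha_surj by (metis UNIV_I imageE)

lemma rel_equiv_sum:
  "finite S \<Longrightarrow> (\<And>p. p \<in> S \<Longrightarrow> rel_equiv (F p) (G p)) \<Longrightarrow>
   rel_equiv (\<lambda>r. \<Sum>p\<in>S. c p * F p r) (\<lambda>r. \<Sum>p\<in>S. c p * G p r)"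
  by (induction S rule: finite_induct) (simp_all add: rel_equiv_refl rel_equiv_add rel_equiv_scale)

lemma rel_equiv_linear_sum:
  assumes add: "\<And>x x'. rel_equiv (F (x + x')) (\<lambda>q. F x q + F x' q)"
    and scale: "\<And>c x. rel_equiv (F (s c x)) (\<lambda>q. c * F x q)"
    and "finite S"
  shows "rel_equiv (\<lambda>q. \<Sum>p\<in>S. c p * F (x p) q) (F (\<Sum>p\<in>S. s (c p) (x p)))"
  using \<open>finite S\<close>
proof (induction S rule: finite_induct)
  case empty
  show ?case using scale[of 0 0] by (simp add: rel_equiv_sym)
next
  case (insert p S)
  have "rel_equiv (F (\<Sum>p\<in>insert p S. s (c p) (x p)))
      (\<lambda>q. F (s (c p) (x p)) q + F (\<Sum>p\<in>S. s (c p) (x p)) q)"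
    using insert.hyps by (simp add: add)
  also have "rel_equiv \<dots> (\<lambda>q. c p * F (x p) q + (\<Sum>p\<in>S. c p * F (x p) q))"
    by (intro rel_equiv_add scale rel_equiv_sym[OF insert.IH])
  finally show ?case
    using insert.hyps by (simp add: rel_equiv_sym)
qed

lemma rel_equiv_delta_add_left:
  "rel_equiv (delta (x + x', y)) (\<lambda>q. delta (x, y) q + delta (x', y) q)"
  and rel_equiv_delta_add_right:
  "rel_equiv (delta (y, x + x')) (\<lambda>q. delta (y, x) q + delta (y, x') q)"
  and rel_equiv_delta_scale_left: "rel_equiv (delta (s c x, y)) (\<lambda>q. c * delta (x, y) q)"
  and rel_equiv_delta_scale_right: "rel_equiv (delta (y, s c x)) (\<lambda>q. c * delta (y, x) q)"
proof -
  have "(\<lambda>q. delta (x + x', y) q - delta (x, y) q - delta (x', y) q) \<in> R"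
    "(\<lambda>q. delta (y, x + x') q - delta (y, x) q - delta (y, x') q) \<in> R"
    "(\<lambda>q. delta (s c x, y) q - c * delta (x, y) q) \<in> R"
    "(\<lambda>q. delta (y, s c x) q - c * delta (y, x) q) \<in> R"
    by (rule relsp.gen, unfold rel_gens_def range_alpha, blast)+
  then show "rel_equiv (delta (x + x', y)) (\<lambda>q. delta (x, y) q + delta (x', y) q)"
    "rel_equiv (delta (y, x + x')) (\<lambda>q. delta (y, x) q + delta (y, x') q)"
    "rel_equiv (delta (s c x, y)) (\<lambda>q. c * delta (x, y) q)"
    "rel_equiv (delta (y, s c x)) (\<lambda>q. c * delta (y, x) q)"
    by (simp_all add: rel_equiv_def diff_diff_add)
qed

text \<open>Modulo the bilinearity relations the bilinear extension of
  \<open>[{a, b}, {c, e}] = {[a, b], [c, e]}\<close> collapses to a single generator.\<close>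

lemma uc_br_eq:
  assumes "X \<in> UCE" "Y \<in> UCE"
  shows "ubr X Y = cl (delta (U X, U Y))"
proof -
  let ?f = "rep X" and ?g = "rep Y" and ?b = "\<lambda>p. br (fst p) (snd p)"
  have fin: "finite (supp ?f)" "finite (supp ?g)"
    using assms by (simp_all add: finite_supp_rep)
  have double_sum: "(\<lambda>r. \<Sum>p\<in>supp ?f. \<Sum>q\<in>supp ?g. ?f p * ?g q * delta (?b p, ?b q) r)
      = (\<lambda>r. \<Sum>p\<in>supp ?f. ?f p * (\<Sum>q\<in>supp ?g. ?g q * delta (?b p, ?b q) r))"
    by (simp add: sum_distrib_left mult.assoc)
  have "rel_equiv (\<lambda>r. \<Sum>p\<in>supp ?f. ?f p * (\<Sum>q\<in>supp ?g. ?g q * delta (?b p, ?b q) r))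
      (\<lambda>r. \<Sum>p\<in>supp ?f. ?f p * delta (?b p, U Y) r)"
    using fin unfolding U_alpha_def
    by (intro rel_equiv_sum rel_equiv_linear_sum
        rel_equiv_delta_add_right rel_equiv_delta_scale_right)
  also have "rel_equiv \<dots> (delta (U X, U Y))"
    using fin unfolding U_alpha_def[of _ _ _ X]
    by (intro rel_equiv_linear_sum rel_equiv_delta_add_left rel_equiv_delta_scale_left)
  finally show ?thesis
    by (simp add: uc_br_def double_sum cls_eqI)
qed

definition uce_push :: "('v \<Rightarrow> 'v) \<Rightarrow> ('v \<times> 'v \<Rightarrow> 'k) set \<Rightarrow> ('v \<times> 'v \<Rightarrow> 'k) set" where
  "uce_push h X = cl (push (map_prod h h) (rep X))"

lemma uce_map_restrict: "uce_map s br al h = restrict (uce_push h) UCE"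
  unfolding uce_map_def uce_push_def ..

lemma uce_map_eq: "X \<in> UCE \<Longrightarrow> uce_map s br al h X = uce_push h X"
  by (simp add: uce_map_restrict)

lemma uc_alpha_eq: "ualpha X = uce_push al X"
  by (simp add: uc_alpha_def uce_push_def)

lemma push_rel_gens:
  assumes h: "leib_hom s br al h" and "g \<in> rel_gens s br al"
  shows "push (map_prod h h) g \<in> rel_gens s br al"
  using assms(2) unfolding rel_gens_def range_alpha
  by (elim UnE CollectE exE conjE;
      simp add: push_add push_diff push_scale push_delta finite_supp_intros
        leib_hom_add[OF h] leib_hom_scale[OF h] leib_hom_bracket[OF h] leib_hom_alpha[OF h];
      blast)

lemma push_relsp: "leib_hom s br al h \<Longrightarrow> g \<in> R \<Longrightarrow> push (map_prod h h) g \<in> R"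
  by (erule relsp.induct)
    (simp_all add: relsp.zero relsp.gen push_rel_gens relsp_add relsp_scale push_add push_scale
      finite_supp_relsp)

lemma uce_push_cls:
  assumes h: "leib_hom s br al h" and f: "finite (supp f)"
  shows "uce_push h (cl f) = cl (push (map_prod h h) f)"
proof -
  have "(\<lambda>p. rep (cl f) p - f p) \<in> R"
    using rel_equiv_rep_cls[OF f] by (simp add: rel_equiv_def)
  then have "push (map_prod h h) (\<lambda>p. rep (cl f) p - f p) \<in> R"
    by (rule push_relsp[OF h])
  then show ?thesis
    using f unfolding uce_push_def
    by (intro cls_eqI) (simp add: rel_equiv_def push_diff finite_supp_rep cls_in_UC)
qed

lemma uce_push_in_UC: "X \<in> UCE \<Longrightarrow> uce_push h X \<in> UCE"
  unfolding uce_push_def by (intro cls_in_UC finite_supp_push finite_supp_rep)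

lemma uce_push_comp:
  assumes "leib_hom s br al h" "leib_hom s br al h'" "X \<in> UCE"
  shows "uce_push h (uce_push h' X) = uce_push (h \<circ> h') X"
  using assms(3)
  by (cases rule: UC_cases)
    (simp add: assms uce_push_cls leib_hom_comp finite_supp_push push_push map_prod_compose)

lemma uce_push_id: "X \<in> UCE \<Longrightarrow> uce_push id X = X"
  by (erule UC_cases) (simp add: uce_push_cls[OF leib_hom_id] push_id map_prod.id)

lemma uce_push_add:
  assumes h: "leib_hom s br al h" and "X \<in> UCE" "Y \<in> UCE"
  shows "uce_push h (uadd X Y) = uadd (uce_push h X) (uce_push h Y)"
  using assms(2,3)
  by (auto elim!: UC_cases simp: uc_add_cls uce_push_cls[OF h] finite_supp_intros
      finite_supp_push push_add)

lemma uce_push_smul: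
  assumes h: "leib_hom s br al h" and "X \<in> UCE"
  shows "uce_push h (usmul c X) = usmul c (uce_push h X)"
  using assms(2)
  by (auto elim!: UC_cases simp: uc_smul_cls uce_push_cls[OF h] finite_supp_intros
      finite_supp_push push_scale)

lemma U_alpha_uce_push:
  assumes h: "leib_hom s br al h" and "X \<in> UCE"
  shows "U (uce_push h X) = h (U X)"
  using assms(2)
proof (cases rule: UC_cases)
  case (1 f)
  from \<open>finite (supp f)\<close> have "bracket_sum (push (map_prod h h) f) = h (bracket_sum f)"
    by (induction rule: finite_supp_induct)
      (simp_all add: leib_hom_zero[OF h] push_add_delta bracket_sum_add bracket_sum_scale
        finite_supp_intros finite_supp_push leib_hom_add[OF h] leib_hom_scale[OF h]
        leib_hom_bracket[OF h])
  with 1 show ?thesis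
    by (simp add: uce_push_cls[OF h] U_alpha_cls finite_supp_push)
qed

lemma uce_push_br:
  assumes h: "leib_hom s br al h" and "X \<in> UCE" "Y \<in> UCE"
  shows "uce_push h (ubr X Y) = ubr (uce_push h X) (uce_push h Y)"
  using assms(2,3)
  by (simp add: uc_br_eq uce_push_in_UC uce_push_cls[OF h] push_delta U_alpha_uce_push[OF h])

lemma uce_push_alpha:
  assumes h: "leib_hom s br al h" and "X \<in> UCE"
  shows "uce_push h (ualpha X) = ualpha (uce_push h X)"
proof -
  have "h \<circ> al = al \<circ> h"
    using leib_hom_alpha[OF h] by auto
  then show ?thesis
    unfolding uc_alpha_eq
    using uce_push_comp[OF h leib_hom_alpha_self assms(2)]
      uce_push_comp[OF leib_hom_alpha_self h assms(2)]
    by simp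
qed

lemma uc_br_in_UC: "X \<in> UCE \<Longrightarrow> Y \<in> UCE \<Longrightarrow> ubr X Y \<in> UCE"
  by (simp add: uc_br_eq cls_in_UC)

lemma uc_alpha_in_UC: "X \<in> UCE \<Longrightarrow> ualpha X \<in> UCE"
  by (simp add: uc_alpha_eq uce_push_in_UC)

lemma U_alpha_br: "X \<in> UCE \<Longrightarrow> Y \<in> UCE \<Longrightarrow> U (ubr X Y) = br (U X) (U Y)"
  by (simp add: uc_br_eq U_alpha_delta)

lemma U_alpha_alpha: "X \<in> UCE \<Longrightarrow> U (ualpha X) = al (U X)"
  by (simp add: uc_alpha_eq U_alpha_uce_push leib_hom_alpha_self)

subsection \<open>From \<open>Aut(L)\<close> to the stabiliser of \<open>Ker U\<^sub>\<alpha>\<close>\<close>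

lemma uce_push_inv_cancel:
  assumes h: "leib_hom s br al h" "bij h" and X: "X \<in> UCE"
  shows "uce_push (inv_into UNIV h) (uce_push h X) = X"
    and "uce_push h (uce_push (inv_into UNIV h) X) = X"
proof -
  have "inv_into UNIV h \<circ> h = id" "h \<circ> inv_into UNIV h = id"
    using h(2) surj_iff[of h] by (simp_all add: bij_is_inj bij_is_surj)
  then show "uce_push (inv_into UNIV h) (uce_push h X) = X"
    "uce_push h (uce_push (inv_into UNIV h) X) = X"
    using uce_push_comp[OF leib_hom_inv[OF h] h(1) X] uce_push_comp[OF h(1) leib_hom_inv[OF h] X]
      uce_push_id[OF X]
    by simp_all
qed

lemma uce_map_uc_aut:
  assumes h: "leib_hom s br al h" "bij h"
  shows "uc_aut s br al (uce_map s br al h)"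
proof -
  have "bij_betw (uce_push h) UCE UCE"
    by (rule bij_betw_byWitness[where f' = "uce_push (inv_into UNIV h)"])
      (auto simp: uce_push_inv_cancel[OF h] uce_push_in_UC)
  then have "bij_betw (uce_map s br al h) UCE UCE"
    by (rule bij_betw_cong[THEN iffD1, rotated]) (simp add: uce_map_eq)
  moreover have "uce_map s br al h \<in> extensional UCE"
    by (simp add: uce_map_def)
  ultimately show ?thesis
    unfolding uc_aut_def
    by (simp add: uce_map_eq uc_add_in_UC uc_smul_in_UC uc_br_in_UC uc_alpha_in_UC
        uce_push_add[OF h(1)] uce_push_smul[OF h(1)] uce_push_br[OF h(1)] uce_push_alpha[OF h(1)])
qed

lemma uce_map_KerU:
  assumes h: "leib_hom s br al h" "bij h"
  shows "uce_map s br al h ` Ker = Ker"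
proof -
  have "uce_push k ` Ker \<subseteq> Ker" if "leib_hom s br al k" for k
    using that by (auto simp: KerU_def uce_push_in_UC U_alpha_uce_push leib_hom_zero)
  from this[OF h(1)] this[OF leib_hom_inv[OF h]] have "uce_push h ` Ker = Ker"
    using uce_push_inv_cancel(2)[OF h] by (force simp: KerU_def)
  moreover have "uce_map s br al h ` Ker = uce_push h ` Ker"
    by (rule image_cong) (simp_all add: KerU_def uce_map_eq)
  ultimately show ?thesis
    by simp
qed

lemma uce_map_in_StabUce:
  "leib_hom s br al h \<Longrightarrow> bij h \<Longrightarrow> uce_map s br al h \<in> carrier (StabUce s br al)"
  by (simp add: StabUce_def uce_map_uc_aut uce_map_KerU)

lemma uce_map_comp:
  assumes "leib_hom s br al h" "leib_hom s br al h'"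
  shows "uce_map s br al (h \<circ> h') = restrict (uce_map s br al h \<circ> uce_map s br al h') UCE"
  by (auto simp: uce_map_restrict fun_eq_iff uce_push_in_UC uce_push_comp[OF assms])

lemma uce_map_id: "uce_map s br al id = restrict id UCE"
  by (auto simp: uce_map_restrict fun_eq_iff uce_push_id)

lemma uce_map_hom: "uce_map s br al \<in> hom (AutL s br al) (StabUce s br al)"
  by (rule homI) (simp_all add: AutL_def uce_map_in_StabUce, simp add: StabUce_def uce_map_comp)

lemma uce_map_inj: "inj_on (uce_map s br al) (carrier (AutL s br al))"
proof (rule inj_onI)
  fix h h' assume h: "h \<in> carrier (AutL s br al)" and h': "h' \<in> carrier (AutL s br al)"
    and eq: "uce_map s br al h = uce_map s br al h'"
  show "h = h'"
  proof
    fix x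
    obtain X where X: "X \<in> UCE" "U X = x" by (rule U_alpha_surjE)
    have "h x = U (uce_map s br al h X)"
      using h X by (simp add: AutL_def uce_map_eq U_alpha_uce_push)
    also have "\<dots> = h' x"
      using h' X by (simp add: AutL_def eq uce_map_eq U_alpha_uce_push)
    finally show "h x = h' x" .
  qed
qed

subsection \<open>Descending a stabilising automorphism to \<open>L\<close>\<close>

text \<open>Well defined on \<open>L = U\<^sub>\<alpha>(uce\<^sub>\<alpha>(L))\<close> because \<open>g\<close> stabilises \<open>Ker U\<^sub>\<alpha>\<close>.\<close>

definition descend :: "(('v \<times> 'v \<Rightarrow> 'k) set \<Rightarrow> ('v \<times> 'v \<Rightarrow> 'k) set) \<Rightarrow> 'v \<Rightarrow> 'v" where
  "descend g x = U (g (SOME X. X \<in> UCE \<and> U X = x))"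

context
  fixes g assumes g: "g \<in> carrier (StabUce s br al)"
begin

lemma stab_extensional: "g \<in> extensional UCE"
  and stab_bij: "bij_betw g UCE UCE"
  and stab_add: "X \<in> UCE \<Longrightarrow> Y \<in> UCE \<Longrightarrow> g (uadd X Y) = uadd (g X) (g Y)"
  and stab_smul: "X \<in> UCE \<Longrightarrow> g (usmul c X) = usmul c (g X)"
  and stab_br: "X \<in> UCE \<Longrightarrow> Y \<in> UCE \<Longrightarrow> g (ubr X Y) = ubr (g X) (g Y)"
  and stab_alpha: "X \<in> UCE \<Longrightarrow> g (ualpha X) = ualpha (g X)"
  and stab_KerU: "g ` Ker = Ker"
  using g by (simp_all add: StabUce_def uc_aut_def)

lemma stab_in_UC: "X \<in> UCE \<Longrightarrow> g X \<in> UCE"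
  using stab_bij bij_betwE by blast

lemma U_alpha_stab_eq_iff:
  assumes X: "X \<in> UCE" and Y: "Y \<in> UCE"
  shows "U (g X) = U (g Y) \<longleftrightarrow> U X = U Y"
proof -
  let ?Z = "uadd X (usmul (-1) Y)"
  have Z: "?Z \<in> UCE"
    using X Y by (simp add: uc_add_in_UC uc_smul_in_UC)
  have U_Z: "U ?Z = U X - U Y"
    using X Y by (simp add: U_alpha_add U_alpha_smul uc_smul_in_UC)
  have U_gZ: "U (g ?Z) = U (g X) - U (g Y)"
    using X Y by (simp add: stab_add stab_smul stab_in_UC U_alpha_add U_alpha_smul uc_smul_in_UC)
  have "Ker \<subseteq> UCE" by (auto simp: KerU_def)
  then have "g ?Z \<in> Ker \<longleftrightarrow> ?Z \<in> Ker"
    using stab_KerU Z stab_bij by (metis bij_betw_imp_inj_on inj_on_image_mem_iff)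
  with Z stab_in_UC[OF Z] U_Z U_gZ show ?thesis
    by (simp add: KerU_def)
qed

lemma descend_U_alpha:
  assumes "X \<in> UCE"
  shows "descend g (U X) = U (g X)"
proof -
  let ?Y = "SOME Y. Y \<in> UCE \<and> U Y = U X"
  have "?Y \<in> UCE \<and> U ?Y = U X"
    using someI[of "\<lambda>Y. Y \<in> UCE \<and> U Y = U X" X] assms by blast
  with assms show ?thesis
    by (simp add: descend_def U_alpha_stab_eq_iff)
qed

lemma descend_binop:
  assumes closed: "\<And>X Y. X \<in> UCE \<Longrightarrow> Y \<in> UCE \<Longrightarrow> op X Y \<in> UCE"
    and U_op: "\<And>X Y. X \<in> UCE \<Longrightarrow> Y \<in> UCE \<Longrightarrow> U (op X Y) = f (U X) (U Y)"
    and stab_op: "\<And>X Y. X \<in> UCE \<Longrightarrow> Y \<in> UCE \<Longrightarrow> g (op X Y) = op (g X) (g Y)"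
  shows "descend g (f x y) = f (descend g x) (descend g y)"
proof -
  obtain X Y where X: "X \<in> UCE" "U X = x" and Y: "Y \<in> UCE" "U Y = y"
    by (meson U_alpha_surjE)
  have "descend g (f (U X) (U Y)) = U (g (op X Y))"
    using X(1) Y(1) by (simp add: U_op[symmetric] descend_U_alpha closed)
  also have "\<dots> = f (descend g (U X)) (descend g (U Y))"
    using X(1) Y(1) by (simp add: stab_op stab_in_UC U_op descend_U_alpha)
  finally show ?thesis
    using X(2) Y(2) by simp
qed

lemma leib_hom_descend: "leib_hom s br al (descend g)"
proof -
  have "descend g (x + y) = descend g x + descend g y" for x y
    by (rule descend_binop[where op = uadd]) (simp_all add: uc_add_in_UC U_alpha_add stab_add)
  moreover have "descend g (s c x) = s c (descend g x)" for c x
    by (rule descend_binop[where op = "\<lambda>X _. usmul c X" and f = "\<lambda>v _. s c v" and y = x])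
      (simp_all add: uc_smul_in_UC U_alpha_smul stab_smul)
  moreover have "descend g (br x y) = br (descend g x) (descend g y)" for x y
    by (rule descend_binop[where op = ubr]) (simp_all add: uc_br_in_UC U_alpha_br stab_br)
  moreover have "descend g (al x) = al (descend g x)" for x
    by (rule descend_binop[where op = "\<lambda>X _. ualpha X" and f = "\<lambda>v _. al v" and y = x])
      (simp_all add: uc_alpha_in_UC U_alpha_alpha stab_alpha)
  ultimately show ?thesis
    by (simp add: leib_hom_def Vector_Spaces.linear_iff v.vector_space_axioms)
qed

lemma bij_descend: "bij (descend g)"
proof (rule bijI)
  show "inj (descend g)"
  proof (rule injI)
    fix x y assume "descend g x = descend g y"
    moreover obtain X Y where "X \<in> UCE" "U X = x" "Y \<in> UCE" "U Y = y"
      by (meson U_alpha_surjE)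
    ultimately show "x = y"
      by (metis descend_U_alpha U_alpha_stab_eq_iff)
  qed
  have "y \<in> range (descend g)" for y
  proof -
    obtain Y where Y: "Y \<in> UCE" "U Y = y" by (rule U_alpha_surjE)
    then obtain X where "X \<in> UCE" "g X = Y"
      using stab_bij by (metis bij_betw_iff_bijections)
    with Y show ?thesis
      by (metis descend_U_alpha rangeI)
  qed
  then show "surj (descend g)"
    by blast
qed

lemma uce_push_descend_delta: "uce_push (descend g) (cl (delta (a, b))) = g (cl (delta (a, b)))"
proof -
  obtain A B where A: "A \<in> UCE" "U A = a" and B: "B \<in> UCE" "U B = b"
    by (meson U_alpha_surjE)
  have "g (cl (delta (U A, U B))) = g (ubr A B)"
    using A(1) B(1) by (simp add: uc_br_eq)
  also have "\<dots> = ubr (g A) (g B)"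
    using A(1) B(1) by (rule stab_br)
  also have "\<dots> = cl (delta (descend g (U A), descend g (U B)))"
    using A(1) B(1) by (simp add: uc_br_eq stab_in_UC descend_U_alpha)
  finally show ?thesis
    using A(2) B(2) by (simp add: uce_push_cls[OF leib_hom_descend] push_delta)
qed

lemma uce_push_descend_cls:
  "finite (supp f) \<Longrightarrow> uce_push (descend g) (cl f) = g (cl f)"
proof (induction rule: finite_supp_induct)
  case zero
  have "cl (\<lambda>_. 0) = usmul 0 (cl (delta (0, 0)))"
    by (simp add: uc_smul_cls)
  then show ?case
    by (simp add: uce_push_smul[OF leib_hom_descend] stab_smul cls_in_UC uce_push_descend_delta)
next
  case (add_delta f p c)
  obtain a b where p: "p = (a, b)" by fastforce
  have "cl (\<lambda>q. f q + c * delta p q) = uadd (cl f) (usmul c (cl (delta p)))"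
    using add_delta.hyps by (simp add: uc_smul_cls uc_add_cls finite_supp_intros)
  with add_delta p show ?case
    by (simp add: uce_push_smul[OF leib_hom_descend] uce_push_add[OF leib_hom_descend]
        stab_smul stab_add cls_in_UC uc_smul_in_UC uce_push_descend_delta)
qed

lemma uce_map_descend: "uce_map s br al (descend g) = g"
proof
  fix X
  show "uce_map s br al (descend g) X = g X"
  proof (cases "X \<in> UCE")
    case True
    then show ?thesis
      by (simp add: uce_map_eq) (erule UC_cases, simp add: uce_push_descend_cls)
  next
    case False
    then show ?thesis
      by (simp add: uce_map_restrict extensional_arb[OF stab_extensional])
  qed
qed

end

lemma uce_map_image_AutL: "uce_map s br al ` carrier (AutL s br al) = carrier (StabUce s br al)"
proof
  show "uce_map s br al ` carrier (AutL s br al) \<subseteq> carrier (StabUce s br al)"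
    by (auto simp: AutL_def uce_map_in_StabUce)
  show "carrier (StabUce s br al) \<subseteq> uce_map s br al ` carrier (AutL s br al)"
  proof
    fix g assume g: "g \<in> carrier (StabUce s br al)"
    have "descend g \<in> carrier (AutL s br al)"
      using leib_hom_descend[OF g] bij_descend[OF g] by (simp add: AutL_def)
    then show "g \<in> uce_map s br al ` carrier (AutL s br al)"
      using uce_map_descend[OF g] by (metis image_eqI)
  qed
qed

lemma group_StabUce: "group (StabUce s br al)"
proof -
  have "group ((StabUce s br al)\<lparr>carrier := uce_map s br al ` carrier (AutL s br al),
      one := uce_map s br al \<one>\<^bsub>AutL s br al\<^esub>\<rparr>)"
    by (rule group.hom_imp_img_group[OF group_AutL uce_map_hom])
  then show ?thesis
    unfolding uce_map_image_AutL by (simp add: AutL_def uce_map_id StabUce_def)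
qed

lemma uce_map_iso: "uce_map s br al \<in> iso (AutL s br al) (StabUce s br al)"
  using uce_map_hom uce_map_inj uce_map_image_AutL by (simp add: iso_def bij_betw_def)

end

theorem corollary4p4:
  fixes s :: "'k::field \<Rightarrow> 'v::ab_group_add \<Rightarrow> 'v"
    and br :: "'v \<Rightarrow> 'v \<Rightarrow> 'v" and al :: "'v \<Rightarrow> 'v"
  assumes "hom_leibniz s br al"
    and "alpha_perfect s br al"
  shows "group (AutL s br al) \<and> group (StabUce s br al)
    \<and> uce_map s br al \<in> iso (AutL s br al) (StabUce s br al)"
proof -
  interpret alpha_perfect_hom_leibniz s br al
    using assms by (rule alpha_perfect_hom_leibniz.intro)
  show ?thesis
    using group_AutL group_StabUce uce_map_iso by blast
qed

end
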